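(* Let $n\ge 1$ and $A \in \mathrm{SL}(n,\mathbb{C})$. Then $A$ is $c$-reversible if and only if $A$ is strongly $c$-reversible.
   Context: For $g\in\mathrm{SL}(n,\mathbb{C})$, $\overline{g}$ denotes the entrywise complex conjugate matrix. An element $g \in \mathrm{SL}(n,\mathbb{C})$ is called $c$-reversible if there exists $h\in\mathrm{SL}(n,\mathbb{C})$ with $hgh^{-1}=\overline{g}^{-1}$. If moreover such an $h$ can be chosen with $h\overline{h}=I$, then $g$ is called strongly $c$-reversible (and such $h$ is called an involutory $c$-symmetry). *)

theory Defs
  imports "HOL-Analysis.Analysis"
begin

text \<open>n x n complex matrices are modelled as complex^'n^'n, with n = CARD('n) \<ge> 1.\<close>

definition SL :: "(complex^'n^'n) set" where
  "SL = {A. det A = 1}"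

definition conj_mat :: "complex^'n^'n \<Rightarrow> complex^'n^'n" where
  "conj_mat A = (\<chi> i j. cnj (A $ i $ j))"

definition c_reversible :: "complex^'n^'n \<Rightarrow> bool" where
  "c_reversible g \<longleftrightarrow> (\<exists>h \<in> SL. h ** g ** matrix_inv h = matrix_inv (conj_mat g))"

definition strongly_c_reversible :: "complex^'n^'n \<Rightarrow> bool" where
  "strongly_c_reversible g \<longleftrightarrow>
     (\<exists>h \<in> SL. h ** g ** matrix_inv h = matrix_inv (conj_mat g) \<and> h ** conj_mat h = mat 1)"

end

theory Submission
  imports
    Defs
    "Jordan_Normal_Form.Jordan_Normal_Form_Existence"
    "Jordan_Normal_Form.Jordan_Normal_Form_Uniqueness"
begin

(* If h A h\<inverse> = (cnj A)\<inverse>, then A is similar to (cnj A)\<inverse>. Comparing generalised eigenspaces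
   of a matrix, its conjugate and its inverse, the Jordan blocks of A are therefore permuted by
   the involution J_k(e) \<mapsto> J_k(1 / cnj e), so A is similar to a direct sum of self-dual blocks
   J_k(e) with |e| = 1 and of pairs J_k(e) \<oplus> J_k(1 / cnj e).
   Having an involutory c-symmetry in GL(n), i.e. g with g (cnj g) = I and (cnj A) g A = g,
   is invariant under similarity and direct sums, so it suffices to treat the blocks. For a pair,
   realised as X \<oplus> (cnj X)\<inverse>, the block swap is such a symmetry. A self-dual block is similar
   to the Cayley-type matrix Y = e (cnj S) S\<inverse> with S = I - i N, which satisfies (cnj Y) Y = I,
   so g = I works. Finally g (cnj g) = I forces |det g| = 1, and rescaling g by a unimodular
   n-th root of cnj (det g) moves it into SL(n). *)

lemma assoc_mult_mat_dim:
  "dim_col A = dim_row B \<Longrightarrow> dim_col B = dim_row C \<Longrightarrow> A * B * C = A * (B * C)"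
  for A :: "'a :: semiring_0 mat"
  by (rule assoc_mult_mat[of A "dim_row A" "dim_col A" B "dim_col B" C "dim_col C"]) auto

lemma mult_cancel_left_mat:
  fixes A B :: "'a :: semiring_1 mat"
  assumes "A \<in> carrier_mat n n" "B \<in> carrier_mat n n" "B * A = 1\<^sub>m n" "dim_row Z = n"
  shows "B * (A * Z) = Z"
  using assms by (simp flip: assoc_mult_mat_dim)

lemma pow_one_mat: "(1\<^sub>m n :: 'a :: semiring_1 mat) ^\<^sub>m k = 1\<^sub>m n"
  by (induct k) auto

lemma pow_mat_mult_commute:
  fixes A B :: "'a :: semiring_1 mat"
  assumes A: "A \<in> carrier_mat n n" and B: "B \<in> carrier_mat n n" and AB: "A * B = B * A"
  shows "A ^\<^sub>m k * B = B * A ^\<^sub>m k"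
proof (induct k)
  case (Suc k)
  have "A ^\<^sub>m Suc k * B = A ^\<^sub>m k * (A * B)" using A B by (simp add: assoc_mult_mat_dim)
  also have "\<dots> = (A ^\<^sub>m k * B) * A" unfolding AB using A B by (simp add: assoc_mult_mat_dim)
  also have "\<dots> = B * A ^\<^sub>m Suc k" unfolding Suc using A B by (simp add: assoc_mult_mat_dim)
  finally show ?case .
qed (use A B in simp)

lemma pow_mat_mult_distrib:
  fixes A B :: "'a :: semiring_1 mat"
  assumes A: "A \<in> carrier_mat n n" and B: "B \<in> carrier_mat n n" and AB: "A * B = B * A"
  shows "(A * B) ^\<^sub>m k = A ^\<^sub>m k * B ^\<^sub>m k"
proof (induct k)
  case (Suc k)
  have "(A * B) ^\<^sub>m Suc k = A ^\<^sub>m k * ((B ^\<^sub>m k * A) * B)"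
    using Suc A B by (simp add: assoc_mult_mat_dim)
  also have "B ^\<^sub>m k * A = A * B ^\<^sub>m k"
    using pow_mat_mult_commute[OF B A AB[symmetric]] .
  also have "A ^\<^sub>m k * ((A * B ^\<^sub>m k) * B) = A ^\<^sub>m Suc k * B ^\<^sub>m Suc k"
    using A B by (simp add: assoc_mult_mat_dim)
  finally show ?case .
qed (use A B in simp)

lemma pow_mat_inverse:
  fixes A B :: "'a :: semiring_1 mat"
  assumes A: "A \<in> carrier_mat n n" and B: "B \<in> carrier_mat n n"
    and AB: "A * B = 1\<^sub>m n" and BA: "B * A = 1\<^sub>m n"
  shows "A ^\<^sub>m k * B ^\<^sub>m k = 1\<^sub>m n"
  using pow_mat_mult_distrib[OF A B, of k] AB BA pow_one_mat by metis

lemma kernel_dim_mult_invertible_left: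
  fixes M :: "'a :: field mat"
  assumes M: "M \<in> carrier_mat n m" and B: "B \<in> carrier_mat n n" and C: "C \<in> carrier_mat n n"
    and CB: "C * B = 1\<^sub>m n"
  shows "kernel_dim (B * M) = kernel_dim M"
  unfolding kernel_dim_def using M B mat_kernel_mult_eq[OF M B C CB] by simp

lemma kernel_dim_pow_mult_invertible:
  fixes M :: "'a :: field mat"
  assumes M: "M \<in> carrier_mat n n" and W: "W \<in> carrier_mat n n" and W': "W' \<in> carrier_mat n n"
    and WW': "W * W' = 1\<^sub>m n" and W'W: "W' * W = 1\<^sub>m n" and comm: "W * M = M * W"
  shows "kernel_dim ((W * M) ^\<^sub>m k) = kernel_dim (M ^\<^sub>m k)"
  unfolding pow_mat_mult_distrib[OF W M comm]
  by (rule kernel_dim_mult_invertible_left[OF pow_carrier_mat[OF M] pow_carrier_mat[OF W]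
        pow_carrier_mat[OF W'] pow_mat_inverse[OF W' W W'W WW']])

lemma kernel_dim_pow_invertible:
  fixes A :: "'a :: field mat"
  assumes A: "A \<in> carrier_mat n n" and B: "B \<in> carrier_mat n n"
    and AB: "A * B = 1\<^sub>m n" and BA: "B * A = 1\<^sub>m n"
  shows "kernel_dim (A ^\<^sub>m k) = 0"
proof -
  have "kernel_dim (A ^\<^sub>m k) = kernel_dim (B ^\<^sub>m k * A ^\<^sub>m k)"
    by (rule kernel_dim_mult_invertible_left[symmetric, OF pow_carrier_mat[OF A]
          pow_carrier_mat[OF B] pow_carrier_mat[OF A] pow_mat_inverse[OF A B AB BA]])
  also have "\<dots> = kernel_dim (1\<^sub>m n :: 'a mat)" unfolding pow_mat_inverse[OF B A BA AB] ..
  finally show ?thesis using kernel_one_mat(1)[of n] by (simp add: kernel_dim_def)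
qed

section \<open>Generalised eigenspaces\<close>

lemma char_matrix_zero: "A \<in> carrier_mat n n \<Longrightarrow> char_matrix A 0 = A"
  by (auto intro!: eq_matI simp: char_matrix_def)

lemma dim_gen_eigenspace_zero_invertible:
  fixes A :: "'a :: field mat"
  assumes A: "A \<in> carrier_mat n n" and B: "B \<in> carrier_mat n n"
    and AB: "A * B = 1\<^sub>m n" and BA: "B * A = 1\<^sub>m n"
  shows "dim_gen_eigenspace A 0 k = 0"
  unfolding dim_gen_eigenspace_def char_matrix_zero[OF A]
  by (rule kernel_dim_pow_invertible[OF A B AB BA])

lemma dim_gen_eigenspace_jordan_block:
  "dim_gen_eigenspace (jordan_block n a) ev k = (if a = ev then min k n else 0)"
  using dim_gen_eigenspace_jordan_matrix[of "[(n, a)]" ev k]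
  by (simp add: jordan_matrix_def del: diag_block_mat.simps)

text \<open>\<open>char_matrix Z \<nu> = (-\<nu> Z) (X - \<nu>\<inverse>)\<close> for \<open>Z = X\<inverse>\<close>, and \<open>-\<nu> Z\<close> is invertible
  and commutes with \<open>X - \<nu>\<inverse>\<close>.\<close>

lemma dim_gen_eigenspace_inverse:
  fixes X :: "'a :: field mat"
  assumes X: "X \<in> carrier_mat n n" and Z: "Z \<in> carrier_mat n n"
    and XZ: "X * Z = 1\<^sub>m n" and ZX: "Z * X = 1\<^sub>m n" and nu: "\<nu> \<noteq> 0"
  shows "dim_gen_eigenspace Z \<nu> k = dim_gen_eigenspace X (inverse \<nu>) k"
proof -
  define M where "M = char_matrix X (inverse \<nu>)"
  define W where "W = (- \<nu>) \<cdot>\<^sub>m Z"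
  define W' where "W' = (- inverse \<nu>) \<cdot>\<^sub>m X"
  have M: "M \<in> carrier_mat n n" and W: "W \<in> carrier_mat n n" and W': "W' \<in> carrier_mat n n"
    using X Z by (auto simp: M_def W_def W'_def)
  have WW': "W * W' = 1\<^sub>m n" and W'W: "W' * W = 1\<^sub>m n"
    using X Z XZ ZX nu by (auto intro!: eq_matI simp: W_def W'_def
        mult_smult_assoc_mat[OF _ smult_carrier_mat] mult_smult_distrib)
  have ZM: "Z * M = 1\<^sub>m n + (- inverse \<nu>) \<cdot>\<^sub>m Z" and MZ: "M * Z = 1\<^sub>m n + (- inverse \<nu>) \<cdot>\<^sub>m Z"
    using X Z XZ ZX
    by (auto simp: M_def char_matrix_def mult_add_distrib_mat add_mult_distrib_mat
        mult_smult_distrib mult_smult_assoc_mat)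
  have comm: "W * M = M * W"
    using Z M ZM MZ by (simp add: W_def mult_smult_assoc_mat mult_smult_distrib)
  have "W * M = (- \<nu>) \<cdot>\<^sub>m 1\<^sub>m n + Z"
    using Z M nu unfolding W_def mult_smult_assoc_mat[OF Z M] ZM
    by (auto intro!: eq_matI simp: field_simps)
  also have "\<dots> = char_matrix Z \<nu>"
    using Z by (auto intro!: eq_matI simp: char_matrix_def)
  finally have "char_matrix Z \<nu> = W * M" by simp
  then show ?thesis
    unfolding dim_gen_eigenspace_def M_def[symmetric]
    by (simp add: kernel_dim_pow_mult_invertible[OF M W W' WW' W'W comm])
qed

section \<open>Block diagonal matrices\<close>

definition block_diag_mat :: "'a :: zero mat \<Rightarrow> 'a mat \<Rightarrow> 'a mat" where
  "block_diag_mat A B =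
     four_block_mat A (0\<^sub>m (dim_row A) (dim_col B)) (0\<^sub>m (dim_row B) (dim_col A)) B"

lemma dim_block_diag_mat [simp]:
  "dim_row (block_diag_mat A B) = dim_row A + dim_row B"
  "dim_col (block_diag_mat A B) = dim_col A + dim_col B"
  unfolding block_diag_mat_def by auto

lemma block_diag_mat_carrier [simp]:
  "A \<in> carrier_mat n n \<Longrightarrow> B \<in> carrier_mat m m \<Longrightarrow> block_diag_mat A B \<in> carrier_mat (n + m) (n + m)"
  unfolding block_diag_mat_def by auto

lemma block_diag_mat_assoc:
  "block_diag_mat A (block_diag_mat B C) = block_diag_mat (block_diag_mat A B) C"
  unfolding block_diag_mat_def using assoc_four_block_mat[of A B C] by simp

lemma block_diag_mat_one: "block_diag_mat (1\<^sub>m n) (1\<^sub>m m) = 1\<^sub>m (n + m)"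
  unfolding block_diag_mat_def by simp

lemma block_diag_mat_mult:
  fixes A1 :: "'a :: semiring_0 mat"
  assumes A1: "A1 \<in> carrier_mat n n" and A2: "A2 \<in> carrier_mat m m"
    and B1: "B1 \<in> carrier_mat n n" and B2: "B2 \<in> carrier_mat m m"
  shows "block_diag_mat A1 A2 * block_diag_mat B1 B2 = block_diag_mat (A1 * B1) (A2 * B2)"
  unfolding block_diag_mat_def using A1 A2 B1 B2
  by (subst mult_four_block_mat[OF A1 _ _ A2 B1 _ _ B2]) auto

lemma map_block_diag_mat:
  assumes "A \<in> carrier_mat n n" and "B \<in> carrier_mat m m" and "f 0 = 0"
  shows "map_mat f (block_diag_mat A B) = block_diag_mat (map_mat f A) (map_mat f B)"
  unfolding block_diag_mat_def using assms by (subst map_four_block_mat) auto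

lemma similar_mat_block_diag_mat:
  assumes "similar_mat A A'" and "similar_mat B B'"
  shows "similar_mat (block_diag_mat A B) (block_diag_mat A' B')"
proof -
  from similar_matD[OF assms(1)] obtain n where "A \<in> carrier_mat n n" "A' \<in> carrier_mat n n" by auto
  moreover from similar_matD[OF assms(2)] obtain m where "B \<in> carrier_mat m m" "B' \<in> carrier_mat m m"
    by auto
  ultimately show ?thesis
    unfolding block_diag_mat_def using similar_mat_four_block_0_0[OF assms] by simp
qed

definition block_swap_mat :: "nat \<Rightarrow> nat \<Rightarrow> 'a :: {zero,one} mat" where
  "block_swap_mat n m = four_block_mat (0\<^sub>m n m) (1\<^sub>m n) (1\<^sub>m m) (0\<^sub>m m n)"

lemma dim_block_swap_mat [simp]:
  "dim_row (block_swap_mat n m) = n + m" "dim_col (block_swap_mat n m) = n + m"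
  by (auto simp: block_swap_mat_def)

lemma block_swap_mat_carrier [simp]: "block_swap_mat n m \<in> carrier_mat (n + m) (n + m)"
  by (rule carrier_matI) auto

lemma block_swap_mat_inverse:
  "block_swap_mat n m * block_swap_mat m n = (1\<^sub>m (n + m) :: 'a :: semiring_1 mat)"
  unfolding block_swap_mat_def by (subst mult_four_block_mat[of _ n m _ n _ m _ _ n _ m]) auto

lemma block_swap_mat_conjugates:
  fixes X :: "'a :: semiring_1 mat"
  assumes X: "X \<in> carrier_mat n n" and Y: "Y \<in> carrier_mat m m"
  shows "block_swap_mat n m * block_diag_mat Y X * block_swap_mat m n = block_diag_mat X Y"
proof -
  have "block_swap_mat n m * block_diag_mat Y X = four_block_mat (0\<^sub>m n m) X Y (0\<^sub>m m n)"
    unfolding block_swap_mat_def block_diag_mat_def using X Y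
    by (subst mult_four_block_mat[of _ n m _ n _ m _ _ m _ n]) auto
  then show ?thesis
    unfolding block_swap_mat_def block_diag_mat_def using X Y
    by (simp, subst mult_four_block_mat[of _ n m _ n _ m _ _ n _ m]) auto
qed

lemma similar_mat_block_diag_mat_swap:
  fixes X :: "'a :: comm_ring_1 mat"
  assumes X: "X \<in> carrier_mat n n" and Y: "Y \<in> carrier_mat m m"
  shows "similar_mat (block_diag_mat X Y) (block_diag_mat Y X)"
proof (rule similar_matI[OF _ block_swap_mat_inverse _ block_swap_mat_conjugates[OF X Y, symmetric]])
  show "block_swap_mat m n * block_swap_mat n m = (1\<^sub>m (n + m) :: 'a mat)"
    using block_swap_mat_inverse[of m n] by (simp add: add.commute)
  show "{block_diag_mat X Y, block_diag_mat Y X, block_swap_mat n m, block_swap_mat m n}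
      \<subseteq> carrier_mat (n + m) (n + m)"
    using block_swap_mat_carrier[of n m] block_swap_mat_carrier[of m n]
      block_diag_mat_carrier[OF X Y] block_diag_mat_carrier[OF Y X]
    by (auto simp: add.commute)
qed

section \<open>Jordan normal forms up to permutation of the blocks\<close>

lemma jordan_matrix_Cons:
  "jordan_matrix ((k, e) # as) = block_diag_mat (jordan_block k e) (jordan_matrix as)"
  unfolding jordan_matrix_def block_diag_mat_def by (simp add: Let_def)

lemma jordan_matrix_carrier:
  "jordan_matrix as \<in> carrier_mat (sum_list (map fst as)) (sum_list (map fst as))"
  by simp

lemmas [trans] = similar_mat_trans

lemma similar_mat_jordan_matrix_move:
  fixes xs ys :: "(nat \<times> 'a :: comm_ring_1) list"
  shows "similar_mat (jordan_matrix (xs @ b # ys)) (jordan_matrix (b # xs @ ys))"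
proof (induct xs)
  case Nil
  then show ?case by (auto intro: similar_mat_refl[OF jordan_matrix_carrier])
next
  case (Cons x xs)
  obtain k e where x: "x = (k, e)" by force
  obtain k' e' where b: "b = (k', e')" by force
  let ?J = "jordan_block k e" and ?J' = "jordan_block k' e'" and ?R = "jordan_matrix (xs @ ys)"
  have "similar_mat (jordan_matrix ((x # xs) @ b # ys)) (block_diag_mat ?J (jordan_matrix (b # xs @ ys)))"
    unfolding x append_Cons jordan_matrix_Cons
    by (rule similar_mat_block_diag_mat[OF similar_mat_refl[OF jordan_block_carrier] Cons])
  also have "block_diag_mat ?J (jordan_matrix (b # xs @ ys)) = block_diag_mat (block_diag_mat ?J ?J') ?R"
    unfolding b jordan_matrix_Cons block_diag_mat_assoc ..
  also have "similar_mat \<dots> (block_diag_mat (block_diag_mat ?J' ?J) ?R)"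
    by (rule similar_mat_block_diag_mat[OF similar_mat_block_diag_mat_swap[OF jordan_block_carrier
          jordan_block_carrier] similar_mat_refl[OF jordan_matrix_carrier]])
  also have "block_diag_mat (block_diag_mat ?J' ?J) ?R = jordan_matrix (b # (x # xs) @ ys)"
    unfolding b x append_Cons jordan_matrix_Cons block_diag_mat_assoc ..
  finally show ?case .
qed

lemma similar_mat_jordan_matrix_perm:
  fixes as bs :: "(nat \<times> 'a :: comm_ring_1) list"
  assumes "mset as = mset bs"
  shows "similar_mat (jordan_matrix as) (jordan_matrix bs)"
  using assms
proof (induct as arbitrary: bs)
  case Nil
  then show ?case by (auto intro: similar_mat_refl[OF jordan_matrix_carrier])
next
  case (Cons a as)
  then have "a \<in> set bs" by (metis list.set_intros(1) set_mset_mset)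
  then obtain xs ys where bs: "bs = xs @ a # ys" by (metis split_list)
  obtain k e where a: "a = (k, e)" by force
  have "mset as = mset (xs @ ys)" using Cons(2) unfolding bs by simp
  from Cons(1)[OF this] have "similar_mat (jordan_matrix (a # as)) (jordan_matrix (a # xs @ ys))"
    unfolding a jordan_matrix_Cons
    by (rule similar_mat_block_diag_mat[OF similar_mat_refl[OF jordan_block_carrier]])
  also have "similar_mat \<dots> (jordan_matrix bs)"
    unfolding bs by (rule similar_mat_sym[OF similar_mat_jordan_matrix_move])
  finally show ?case .
qed

lemma jordan_nf_exists_complex:
  assumes "(A :: complex mat) \<in> carrier_mat n n"
  obtains as where "jordan_nf A as"
  using char_poly_factorized[OF assms] jordan_nf_exists[OF assms] by blast

lemma count_mset_jordan_nf:
  assumes "jordan_nf A as" and "k \<noteq> 0"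
  shows "count (mset as) (k, e) = compute_nr_of_jordan_blocks A e k"
  unfolding count_mset count_list_eq_length_filter compute_nr_of_jordan_blocks[OF assms] ..

lemma count_mset_jordan_nf_eq:
  assumes A: "jordan_nf A as" and B: "jordan_nf B bs"
    and eq: "dim_gen_eigenspace A e = dim_gen_eigenspace B e'"
  shows "count (mset as) (k, e) = count (mset bs) (k, e')"
proof (cases "k = 0")
  case True
  then have "(k, e) \<notin> set as" "(k, e') \<notin> set bs" using A B unfolding jordan_nf_def by force+
  then show ?thesis by (metis count_mset_0_iff)
next
  case False
  then show ?thesis
    unfolding count_mset_jordan_nf[OF A False] count_mset_jordan_nf[OF B False]
    by (simp add: compute_nr_of_jordan_blocks_def eq)
qed

lemma mset_jordan_nf_eq:
  assumes "jordan_nf A as" and "jordan_nf B bs"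
    and "dim_gen_eigenspace A = dim_gen_eigenspace B"
  shows "mset as = mset bs"
  using count_mset_jordan_nf_eq[OF assms(1,2)] assms(3) by (intro multiset_eqI) force

lemma similar_mat_if_dim_gen_eigenspace_eq:
  fixes A B :: "complex mat"
  assumes A: "A \<in> carrier_mat n n" and B: "B \<in> carrier_mat n n"
    and eq: "dim_gen_eigenspace A = dim_gen_eigenspace B"
  shows "similar_mat A B"
proof -
  obtain as bs where as: "jordan_nf A as" and bs: "jordan_nf B bs"
    using jordan_nf_exists_complex[OF A] jordan_nf_exists_complex[OF B] by metis
  from similar_mat_jordan_matrix_perm[OF mset_jordan_nf_eq[OF as bs eq]] as bs
  show ?thesis unfolding jordan_nf_def using similar_mat_trans similar_mat_sym by blast
qed

interpretation cnj_hom: field_hom cnj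
  by unfold_locales auto

lemma map_mat_cnj_mult [simp]:
  "dim_col A = dim_row B \<Longrightarrow> map_mat cnj (A * B) = map_mat cnj A * map_mat cnj B"
  by (rule cnj_hom.mat_hom_mult[OF carrier_matI carrier_matI]) auto

lemma map_mat_cnj_one [simp]: "map_mat cnj (1\<^sub>m n) = 1\<^sub>m n"
  by (rule cnj_hom.mat_hom_one)

lemma map_mat_cnj_cnj [simp]: "map_mat cnj (map_mat cnj A) = A"
  by (rule eq_matI) auto

lemma map_mat_cnj_smult [simp]: "map_mat cnj (c \<cdot>\<^sub>m A) = cnj c \<cdot>\<^sub>m map_mat cnj A"
  by auto

lemma (in semiring_hom) similar_mat_hom:
  assumes "similar_mat A B"
  shows "similar_mat (mat\<^sub>h A) (mat\<^sub>h B)"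
proof -
  from similar_matD[OF assms] obtain n P Q where
    c: "{A, B, P, Q} \<subseteq> carrier_mat n n" and PQ: "P * Q = 1\<^sub>m n" and QP: "Q * P = 1\<^sub>m n"
    and AB: "A = P * B * Q"
    by blast
  have "mat\<^sub>h A = mat\<^sub>h P * mat\<^sub>h B * mat\<^sub>h Q"
    using c mat_hom_mult[of "P * B" n n Q n] mat_hom_mult[of P n n B n] unfolding AB
    by (simp add: mult_carrier_mat[of P n n B n])
  moreover have "mat\<^sub>h P * mat\<^sub>h Q = 1\<^sub>m n" "mat\<^sub>h Q * mat\<^sub>h P = 1\<^sub>m n"
    using c PQ QP mat_hom_mult[of P n n Q n] mat_hom_mult[of Q n n P n] by (auto simp: mat_hom_one)
  ultimately show ?thesis
    using c by (intro similar_matI[of _ _ "mat\<^sub>h P" "mat\<^sub>h Q" n]) auto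
qed

lemma (in semiring_hom) jordan_matrix_hom:
  "mat\<^sub>h (jordan_matrix as) = jordan_matrix (map (apsnd hom) as)"
proof (induct as)
  case Nil
  then show ?case by (auto simp: jordan_matrix_def)
next
  case (Cons a as)
  obtain k e where a: "a = (k, e)" by force
  have "mat\<^sub>h (jordan_block k e) = jordan_block k (hom e)" by auto
  then show ?case
    unfolding a jordan_matrix_Cons using Cons
    by (simp add: map_block_diag_mat[OF jordan_block_carrier jordan_matrix_carrier] jordan_matrix_Cons)
qed

lemma dim_gen_eigenspace_map_cnj:
  assumes A: "A \<in> carrier_mat n n"
  shows "dim_gen_eigenspace (map_mat cnj A) (cnj ev) = dim_gen_eigenspace A ev"
proof -
  obtain as where jnf: "jordan_nf A as" using jordan_nf_exists_complex[OF A] by blast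
  then have "similar_mat (map_mat cnj A) (jordan_matrix (map (apsnd cnj) as))"
    unfolding jordan_nf_def cnj_hom.jordan_matrix_hom[symmetric] by (intro cnj_hom.similar_mat_hom) simp
  then have "dim_gen_eigenspace (map_mat cnj A) (cnj ev) =
      dim_gen_eigenspace (jordan_matrix (map (apsnd cnj) as)) (cnj ev)"
    by (simp add: dim_gen_eigenspace_similar)
  also have "\<dots> = dim_gen_eigenspace A ev"
    unfolding dim_gen_eigenspace[OF jnf, abs_def] dim_gen_eigenspace_jordan_matrix
    by (intro ext arg_cong[where f = sum_list], induct as) auto
  finally show ?thesis .
qed

definition bidiagonal_mat :: "nat \<Rightarrow> 'a \<Rightarrow> 'a \<Rightarrow> 'a :: zero mat" where
  "bidiagonal_mat n d s = mat n n (\<lambda>(i, j). if i = j then d else if Suc i = j then s else 0)"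

lemma bidiagonal_mat_carrier [simp]: "bidiagonal_mat n d s \<in> carrier_mat n n"
  unfolding bidiagonal_mat_def by simp

lemma jordan_block_eq_bidiagonal_mat: "jordan_block n a = bidiagonal_mat n a 1"
  unfolding jordan_block_def bidiagonal_mat_def ..

lemma one_mat_eq_bidiagonal_mat: "1\<^sub>m n = bidiagonal_mat n 1 0"
  by (auto simp: bidiagonal_mat_def)

lemma bidiagonal_mat_lincomb:
  fixes a b :: "'a :: comm_ring"
  shows "a \<cdot>\<^sub>m bidiagonal_mat n d s + b \<cdot>\<^sub>m bidiagonal_mat n d' s'
    = bidiagonal_mat n (a * d + b * d') (a * s + b * s')"
  by (auto simp: bidiagonal_mat_def)

lemma smult_jordan_block: "(c :: 'a :: semiring_1) \<cdot>\<^sub>m jordan_block n a = bidiagonal_mat n (c * a) c"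
  by (rule eq_matI) (auto simp: bidiagonal_mat_def)

lemma map_bidiagonal_mat:
  "f 0 = 0 \<Longrightarrow> map_mat f (bidiagonal_mat n d s) = bidiagonal_mat n (f d) (f s)"
  by (auto simp: bidiagonal_mat_def)

lemma det_bidiagonal_mat: "det (bidiagonal_mat n d s) = (d :: 'a :: comm_ring_1) ^ n"
proof -
  have "upper_triangular (bidiagonal_mat n d s)"
    by (auto simp: upper_triangular_def bidiagonal_mat_def)
  moreover have "diag_mat (bidiagonal_mat n d s) = replicate n d"
    by (rule nth_equalityI) (auto simp: diag_mat_def bidiagonal_mat_def)
  ultimately show ?thesis by (simp add: det_upper_triangular[of _ n])
qed

lemma kernel_dim_pow_smult:
  fixes M :: "'a :: field mat"
  assumes M: "M \<in> carrier_mat n n" and c: "c \<noteq> 0"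
  shows "kernel_dim ((c \<cdot>\<^sub>m M) ^\<^sub>m k) = kernel_dim (M ^\<^sub>m k)"
proof -
  let ?C = "c \<cdot>\<^sub>m 1\<^sub>m n" and ?C' = "inverse c \<cdot>\<^sub>m 1\<^sub>m n"
  have "c \<cdot>\<^sub>m M = ?C * M" using M by (auto simp: mult_smult_assoc_mat)
  moreover have "kernel_dim ((?C * M) ^\<^sub>m k) = kernel_dim (M ^\<^sub>m k)"
    by (rule kernel_dim_pow_mult_invertible[OF M, of ?C ?C'])
      (use M c in \<open>auto simp: mult_smult_assoc_mat mult_smult_distrib\<close>)
  ultimately show ?thesis by simp
qed

lemma kernel_dim_pow_bidiagonal_mat:
  fixes d s :: "'a :: field"
  assumes "d \<noteq> 0 \<or> s \<noteq> 0"
  shows "kernel_dim (bidiagonal_mat n d s ^\<^sub>m k) = (if d = 0 then min k n else 0)"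
proof (cases "s = 0")
  case True
  then have "bidiagonal_mat n d s = d \<cdot>\<^sub>m 1\<^sub>m n" "d \<noteq> 0"
    using assms by (auto simp: bidiagonal_mat_def)
  then show ?thesis
    using kernel_dim_pow_smult[OF one_carrier_mat, of d n k] kernel_one_mat(1)[of n]
    by (simp add: pow_one_mat kernel_dim_def)
next
  case False
  then have "bidiagonal_mat n d s = s \<cdot>\<^sub>m jordan_block n (d / s)"
    by (simp add: smult_jordan_block)
  then have "kernel_dim (bidiagonal_mat n d s ^\<^sub>m k) = dim_gen_eigenspace (jordan_block n (d / s)) 0 k"
    by (simp add: kernel_dim_pow_smult[OF jordan_block_carrier False] dim_gen_eigenspace_def
        char_matrix_zero[OF jordan_block_carrier])
  then show ?thesis using False by (simp add: dim_gen_eigenspace_jordan_block)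
qed

section \<open>Strong c-reversibility of complex matrices\<close>

text \<open>For invertible \<open>A\<close>, \<open>cnj A * g * A = g\<close> says \<open>g A g\<inverse> = (cnj A)\<inverse>\<close>. The symmetry
  \<open>g\<close> only has to be invertible here; its determinant is normalised at the very end.\<close>

definition strongly_c_reversible_mat :: "nat \<Rightarrow> complex mat \<Rightarrow> bool" where
  "strongly_c_reversible_mat n A \<longleftrightarrow> A \<in> carrier_mat n n \<and>
     (\<exists>g \<in> carrier_mat n n. g * map_mat cnj g = 1\<^sub>m n \<and> map_mat cnj A * g * A = g)"

lemma strongly_c_reversible_mat_similar:
  assumes sim: "similar_mat A B" and B: "strongly_c_reversible_mat n B"
  shows "strongly_c_reversible_mat n A"
proof -
  from B obtain g where Bc: "B \<in> carrier_mat n n" and g: "g \<in> carrier_mat n n"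
    and gg: "g * map_mat cnj g = 1\<^sub>m n" and gB: "map_mat cnj B * g * B = g"
    unfolding strongly_c_reversible_mat_def by blast
  from similar_matD[OF sim] obtain n' P Q where c: "{A, B, P, Q} \<subseteq> carrier_mat n' n'"
    and PQ': "P * Q = 1\<^sub>m n'" and QP': "Q * P = 1\<^sub>m n'" and AB: "A = P * B * Q"
    by blast
  with Bc have A: "A \<in> carrier_mat n n" and P: "P \<in> carrier_mat n n" and Q: "Q \<in> carrier_mat n n"
    and PQ: "P * Q = 1\<^sub>m n" and QP: "Q * P = 1\<^sub>m n"
    by auto
  let ?c = "map_mat cnj"
  have cPQ: "?c P * ?c Q = 1\<^sub>m n" and cQP: "?c Q * ?c P = 1\<^sub>m n"
    using P Q arg_cong[OF PQ, of ?c] arg_cong[OF QP, of ?c] by auto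
  have cancel: "Q * (P * Z) = Z" "?c Q * (?c P * Z) = Z" "g * (?c g * Z) = Z"
    if "dim_row Z = n" for Z
    using that P Q g QP cQP gg by (auto intro: mult_cancel_left_mat[of _ n])
  have "?c B * (g * (B * Q)) = (?c B * g * B) * Q"
    using Bc g Q by (simp add: assoc_mult_mat_dim)
  then have gB': "?c B * (g * (B * Q)) = g * Q" unfolding gB .
  define g' where "g' = ?c P * g * Q"
  have "g' \<in> carrier_mat n n" using P g Q by (simp add: g'_def)
  moreover have "g' * ?c g' = 1\<^sub>m n"
    using P Q g cPQ by (simp add: g'_def assoc_mult_mat_dim cancel)
  moreover have "?c A * g' * A = g'"
    using P Q g Bc unfolding g'_def AB by (simp add: assoc_mult_mat_dim cancel gB')
  ultimately show ?thesis unfolding strongly_c_reversible_mat_def using A by blast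
qed

lemma strongly_c_reversible_mat_block_diag_mat:
  assumes "strongly_c_reversible_mat n A" and "strongly_c_reversible_mat m B"
  shows "strongly_c_reversible_mat (n + m) (block_diag_mat A B)"
proof -
  from assms(1) obtain g where A: "A \<in> carrier_mat n n" and g: "g \<in> carrier_mat n n"
    and gg: "g * map_mat cnj g = 1\<^sub>m n" and gA: "map_mat cnj A * g * A = g"
    unfolding strongly_c_reversible_mat_def by blast
  from assms(2) obtain h where B: "B \<in> carrier_mat m m" and h: "h \<in> carrier_mat m m"
    and hh: "h * map_mat cnj h = 1\<^sub>m m" and hB: "map_mat cnj B * h * B = h"
    unfolding strongly_c_reversible_mat_def by blast
  have "block_diag_mat g h * map_mat cnj (block_diag_mat g h) = 1\<^sub>m (n + m)"
    using g h gg hh by (simp add: map_block_diag_mat block_diag_mat_mult block_diag_mat_one)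
  moreover have "map_mat cnj (block_diag_mat A B) * block_diag_mat g h * block_diag_mat A B
      = block_diag_mat (map_mat cnj A * g * A) (map_mat cnj B * h * B)"
    using A B g h by (simp add: map_block_diag_mat block_diag_mat_mult[of _ n _ m])
  ultimately show ?thesis
    unfolding strongly_c_reversible_mat_def gA hB using A B g h
    by (intro conjI bexI[of _ "block_diag_mat g h"]) auto
qed

lemma strongly_c_reversible_mat_coninvolutory:
  assumes "A \<in> carrier_mat n n" and "map_mat cnj A * A = 1\<^sub>m n"
  shows "strongly_c_reversible_mat n A"
  unfolding strongly_c_reversible_mat_def using assms
  by (intro conjI bexI[of _ "1\<^sub>m n"]) auto

text \<open>The block swap interchanges \<open>A\<close> and \<open>Z\<close>, so it is a symmetry of \<open>A \<oplus> Z\<close>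
  whenever \<open>Z = (cnj A)\<inverse>\<close>.\<close>

lemma strongly_c_reversible_mat_block_diag_cnj_inverse:
  assumes A: "A \<in> carrier_mat k k" and Z: "Z \<in> carrier_mat k k" and AZ: "map_mat cnj A * Z = 1\<^sub>m k"
  shows "strongly_c_reversible_mat (k + k) (block_diag_mat A Z)"
proof -
  let ?c = "map_mat cnj" and ?g = "block_swap_mat k k :: complex mat"
  have "?c (?c A * Z) = A * ?c Z" using A Z by simp
  then have "A * ?c Z = 1\<^sub>m k" using AZ by simp
  then have ZA: "?c Z * A = 1\<^sub>m k"
    using A Z by (auto intro: mat_mult_left_right_inverse[of _ k])
  have gg: "?g * ?g = 1\<^sub>m (k + k)" by (rule block_swap_mat_inverse)
  have cg: "?c ?g = ?g" by (auto simp: block_swap_mat_def)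
  have swap: "?g * block_diag_mat A Z = block_diag_mat Z A * ?g"
  proof -
    have "?g * block_diag_mat A Z = ?g * (?g * block_diag_mat Z A * ?g)"
      using block_swap_mat_conjugates[OF A Z] by simp
    also have "\<dots> = block_diag_mat Z A * ?g"
      using A Z gg by (simp flip: assoc_mult_mat_dim)
    finally show ?thesis .
  qed
  have "?c (block_diag_mat A Z) * ?g * block_diag_mat A Z
      = block_diag_mat (?c A) (?c Z) * (?g * block_diag_mat A Z)"
    using A Z by (simp add: map_block_diag_mat assoc_mult_mat_dim)
  also have "\<dots> = block_diag_mat (?c A * Z) (?c Z * A) * ?g"
    unfolding swap using A Z by (simp add: block_diag_mat_mult flip: assoc_mult_mat_dim)
  also have "\<dots> = ?g" using AZ ZA by (simp add: block_diag_mat_one)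
  finally show ?thesis
    unfolding strongly_c_reversible_mat_def using A Z gg cg
    by (intro conjI bexI[of _ ?g]) auto
qed

section \<open>Strongly c-reversible Jordan blocks\<close>

lemma det_jordan_block: "det (jordan_block n a) = a ^ n"
  unfolding jordan_block_eq_bidiagonal_mat by (rule det_bidiagonal_mat)

lemma obtain_inverse_mat:
  fixes A :: "'a :: field mat"
  assumes "A \<in> carrier_mat n n" and "det A \<noteq> 0"
  obtains B where "B \<in> carrier_mat n n" "A * B = 1\<^sub>m n" "B * A = 1\<^sub>m n"
  using det_non_zero_imp_unit[OF assms, unfolded Units_def, of "()"] by (auto simp: ring_mat_def)

lemma smult_one_plus_smult_mult_inverse:
  fixes S R :: "'a :: comm_ring_1 mat"
  assumes S: "S \<in> carrier_mat n n" and R: "R \<in> carrier_mat n n"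
    and SR: "S * R = 1\<^sub>m n" and RS: "R * S = 1\<^sub>m n"
  shows "(a \<cdot>\<^sub>m 1\<^sub>m n + b \<cdot>\<^sub>m S) * R = a \<cdot>\<^sub>m R + b \<cdot>\<^sub>m 1\<^sub>m n"
    and "R * (a \<cdot>\<^sub>m 1\<^sub>m n + b \<cdot>\<^sub>m S) = a \<cdot>\<^sub>m R + b \<cdot>\<^sub>m 1\<^sub>m n"
proof -
  show "(a \<cdot>\<^sub>m 1\<^sub>m n + b \<cdot>\<^sub>m S) * R = a \<cdot>\<^sub>m R + b \<cdot>\<^sub>m 1\<^sub>m n"
    using S R SR
    by (simp add: add_mult_distrib_mat[of _ n n _ R n] mult_smult_assoc_mat[OF _ R]
        mult_smult_assoc_mat[OF one_carrier_mat R])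
  show "R * (a \<cdot>\<^sub>m 1\<^sub>m n + b \<cdot>\<^sub>m S) = a \<cdot>\<^sub>m R + b \<cdot>\<^sub>m 1\<^sub>m n"
    using S R RS
    by (simp add: mult_add_distrib_mat[OF R smult_carrier_mat smult_carrier_mat, of _ n]
        mult_smult_distrib[OF R] mult_smult_distrib[OF R one_carrier_mat])
qed

lemma similar_mat_jordan_block_if_dim_gen_eigenspace:
  fixes Y :: "complex mat"
  assumes "Y \<in> carrier_mat n n"
    and "\<And>ev k. dim_gen_eigenspace Y ev k = (if a = ev then min k n else 0)"
  shows "similar_mat (jordan_block n a) Y"
  using assms
  by (intro similar_mat_if_dim_gen_eigenspace_eq[OF jordan_block_carrier] ext)
    (auto simp: dim_gen_eigenspace_jordan_block)

lemma strongly_c_reversible_mat_jordan_pair: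
  assumes mu: "\<mu> \<noteq> 0"
  shows "strongly_c_reversible_mat (k + k)
    (block_diag_mat (jordan_block k \<mu>) (jordan_block k (inverse (cnj \<mu>))))"
proof -
  let ?J = "jordan_block k \<mu>"
  have cJ: "map_mat cnj ?J = jordan_block k (cnj \<mu>)" by auto
  obtain Z where Z: "Z \<in> carrier_mat k k"
    and JZ: "map_mat cnj ?J * Z = 1\<^sub>m k" and ZJ: "Z * map_mat cnj ?J = 1\<^sub>m k"
    using obtain_inverse_mat[of "map_mat cnj ?J" k] mu by (auto simp: cJ det_jordan_block)
  have "similar_mat (jordan_block k (inverse (cnj \<mu>))) Z"
  proof (rule similar_mat_jordan_block_if_dim_gen_eigenspace[OF Z])
    fix ev j
    show "dim_gen_eigenspace Z ev j = (if inverse (cnj \<mu>) = ev then min j k else 0)"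
    proof (cases "ev = 0")
      case True
      then show ?thesis
        using dim_gen_eigenspace_zero_invertible[OF Z _ ZJ JZ] mu by simp
    next
      case False
      have "(cnj \<mu> = inverse ev) = (inverse (cnj \<mu>) = ev)" by auto
      with False show ?thesis
        using dim_gen_eigenspace_inverse[OF _ Z JZ ZJ False, of j]
        by (simp add: cJ dim_gen_eigenspace_jordan_block)
    qed
  qed
  then have "similar_mat (block_diag_mat ?J (jordan_block k (inverse (cnj \<mu>)))) (block_diag_mat ?J Z)"
    by (rule similar_mat_block_diag_mat[OF similar_mat_refl[OF jordan_block_carrier]])
  then show ?thesis
    by (rule strongly_c_reversible_mat_similar[OF _
          strongly_c_reversible_mat_block_diag_cnj_inverse[OF jordan_block_carrier Z JZ]])
qed

lemma coninvolutory_cnj_mult_inverse: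
  assumes S: "S \<in> carrier_mat n n" and R: "R \<in> carrier_mat n n" and SR: "S * R = 1\<^sub>m n"
    and c: "cnj c * c = 1"
  shows "map_mat cnj (c \<cdot>\<^sub>m (map_mat cnj S * R)) * (c \<cdot>\<^sub>m (map_mat cnj S * R)) = 1\<^sub>m n"
proof -
  let ?c = "map_mat cnj"
  have "R * S = 1\<^sub>m n" using S R SR by (rule mat_mult_left_right_inverse)
  moreover have "?c (R * S) = ?c R * ?c S" using R S by simp
  ultimately have cRS: "?c R * ?c S = 1\<^sub>m n" by simp
  have SR': "S * ?c R \<in> carrier_mat n n" and RS': "?c S * R \<in> carrier_mat n n"
    using S R by (auto intro!: mult_carrier_mat)
  have "?c (c \<cdot>\<^sub>m (?c S * R)) * (c \<cdot>\<^sub>m (?c S * R)) = cnj c \<cdot>\<^sub>m (c \<cdot>\<^sub>m ((S * ?c R) * (?c S * R)))"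
    using S R by (simp add: mult_smult_assoc_mat[OF SR' smult_carrier_mat[OF RS']]
        mult_smult_distrib[OF SR' RS'])
  also have "(S * ?c R) * (?c S * R) = S * (?c R * ?c S) * R"
    using S R by (simp add: assoc_mult_mat_dim)
  also have "\<dots> = 1\<^sub>m n" using S R SR cRS by simp
  finally show ?thesis using c by auto
qed

text \<open>With \<open>S = I - i N\<close>, \<open>N\<close> the nilpotent Jordan block, and \<open>Y = \<zeta> (cnj S) S\<inverse>\<close> we have
  \<open>cnj S = 2 I - S\<close>, hence \<open>Y - ev = M S\<inverse>\<close> with \<open>M = (\<zeta> - ev) I + i (\<zeta> + ev) N\<close> commuting
  with \<open>S\<inverse>\<close>, so the kernels of the powers of \<open>Y - ev\<close> have the dimensions of those for
  \<open>J\<^sub>k(\<zeta>) - ev\<close>.\<close>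

lemma similar_mat_jordan_block_cayley:
  assumes \<zeta>: "\<zeta> \<noteq> 0" and R: "R \<in> carrier_mat k k"
    and SR: "bidiagonal_mat k 1 (- \<i>) * R = 1\<^sub>m k" and RS: "R * bidiagonal_mat k 1 (- \<i>) = 1\<^sub>m k"
  shows "similar_mat (jordan_block k \<zeta>) (\<zeta> \<cdot>\<^sub>m (map_mat cnj (bidiagonal_mat k 1 (- \<i>)) * R))"
    (is "similar_mat _ ?Y")
proof (rule similar_mat_jordan_block_if_dim_gen_eigenspace)
  let ?S = "bidiagonal_mat k 1 (- \<i>)"
  note S = bidiagonal_mat_carrier[of k 1 "- \<i>"]
  note inv_mult = smult_one_plus_smult_mult_inverse[OF S R SR RS]
  have "map_mat cnj ?S = 2 \<cdot>\<^sub>m 1\<^sub>m k + (- 1) \<cdot>\<^sub>m ?S"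
    unfolding one_mat_eq_bidiagonal_mat bidiagonal_mat_lincomb by (simp add: map_bidiagonal_mat)
  then have Y: "?Y = (2 * \<zeta>) \<cdot>\<^sub>m R + (- \<zeta>) \<cdot>\<^sub>m 1\<^sub>m k"
    using R by (auto simp: inv_mult algebra_simps)
  then show "?Y \<in> carrier_mat k k" using R by simp
  fix ev j
  define M where "M = (2 * \<zeta>) \<cdot>\<^sub>m 1\<^sub>m k + (- (\<zeta> + ev)) \<cdot>\<^sub>m ?S"
  have M: "M \<in> carrier_mat k k" by (simp add: M_def)
  have "char_matrix ?Y ev = M * R"
    unfolding M_def inv_mult Y using R by (auto simp: char_matrix_def algebra_simps)
  moreover have "M * R = R * M" unfolding M_def inv_mult ..
  ultimately have "dim_gen_eigenspace ?Y ev j = kernel_dim (M ^\<^sub>m j)"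
    unfolding dim_gen_eigenspace_def
    by (simp add: kernel_dim_pow_mult_invertible[OF M R S RS SR])
  also have "M = bidiagonal_mat k (\<zeta> - ev) (\<i> * (\<zeta> + ev))"
    unfolding M_def one_mat_eq_bidiagonal_mat bidiagonal_mat_lincomb by (simp add: algebra_simps)
  also have "kernel_dim (\<dots> ^\<^sub>m j) = (if \<zeta> = ev then min j k else 0)"
    using \<zeta> by (subst kernel_dim_pow_bidiagonal_mat) (auto simp: algebra_simps)
  finally show "dim_gen_eigenspace ?Y ev j = (if \<zeta> = ev then min j k else 0)" .
qed

lemma strongly_c_reversible_mat_jordan_block_unimodular:
  assumes \<zeta>: "cnj \<zeta> * \<zeta> = 1"
  shows "strongly_c_reversible_mat k (jordan_block k \<zeta>)"
proof -
  let ?S = "bidiagonal_mat k 1 (- \<i>)"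
  obtain R where R: "R \<in> carrier_mat k k" and SR: "?S * R = 1\<^sub>m k" and RS: "R * ?S = 1\<^sub>m k"
    using obtain_inverse_mat[of ?S k] by (auto simp: det_bidiagonal_mat)
  let ?Y = "\<zeta> \<cdot>\<^sub>m (map_mat cnj ?S * R)"
  have "\<zeta> \<noteq> 0" using \<zeta> by auto
  have "?Y \<in> carrier_mat k k" using R by (simp add: mult_carrier_mat[of _ k k R k])
  then have "strongly_c_reversible_mat k ?Y"
    by (rule strongly_c_reversible_mat_coninvolutory[OF _ coninvolutory_cnj_mult_inverse[OF _ R SR \<zeta>]])
      simp
  then show ?thesis
    by (rule strongly_c_reversible_mat_similar[OF similar_mat_jordan_block_cayley[OF \<open>\<zeta> \<noteq> 0\<close> R SR RS]])
qed

section \<open>Jordan forms closed under the c-dual\<close>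

text \<open>A pair \<open>(k, e)\<close> stands for the Jordan block \<open>J\<^sub>k(e)\<close>; its c-dual \<open>J\<^sub>k(1 / cnj e)\<close> is
  the block that \<open>J\<^sub>k(e)\<close> contributes to \<open>(cnj A)\<inverse>\<close>.\<close>

definition c_dual_block :: "nat \<times> complex \<Rightarrow> nat \<times> complex" where
  "c_dual_block x = (fst x, inverse (cnj (snd x)))"

lemma c_dual_block_c_dual_block [simp]: "c_dual_block (c_dual_block x) = x"
  by (simp add: c_dual_block_def)

definition c_dual_closed :: "(nat \<times> complex) multiset \<Rightarrow> bool" where
  "c_dual_closed M \<longleftrightarrow> (\<forall>x. count M (c_dual_block x) = count M x)"

lemma c_dual_closed_diff:
  "c_dual_closed M \<Longrightarrow> c_dual_closed N \<Longrightarrow> c_dual_closed (M - N)"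
  by (simp add: c_dual_closed_def)

lemma c_dual_block_eq_iff: "c_dual_block x = y \<longleftrightarrow> x = c_dual_block y"
  by auto

lemma c_dual_closed_pair: "c_dual_closed {#a, c_dual_block a#}"
  unfolding c_dual_closed_def by (simp add: c_dual_block_eq_iff)

lemma c_dual_closed_self_dual:
  assumes "c_dual_block a = a"
  shows "c_dual_closed {#a#}"
proof -
  have "count {#a#} (c_dual_block x) = count {#a#} x" for x
    using assms c_dual_block_eq_iff[of x a] by auto
  then show ?thesis unfolding c_dual_closed_def by blast
qed

lemma c_dual_closed_obtain_partner:
  assumes "c_dual_closed (mset (a # as))" and "c_dual_block a \<noteq> a"
  obtains xs ys where "as = xs @ c_dual_block a # ys"
proof -
  have "count (mset (a # as)) (c_dual_block a) = count (mset (a # as)) a"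
    using assms(1) unfolding c_dual_closed_def by blast
  then have "count (mset as) (c_dual_block a) \<noteq> 0" using assms(2) by simp
  then have "c_dual_block a \<in> set as" by simp
  then show ?thesis using that by (meson split_list)
qed

text \<open>Peel off either a self-dual block, which has a unimodular eigenvalue, or a block
  together with its c-dual partner. Eigenvalues must be nonzero: as \<open>inverse 0 = 0\<close>, every
  \<open>J\<^sub>k(0)\<close> would count as self-dual.\<close>

lemma strongly_c_reversible_mat_jordan_matrix:
  assumes "\<forall>x \<in> set as. snd x \<noteq> 0" and "c_dual_closed (mset as)"
  shows "strongly_c_reversible_mat (sum_list (map fst as)) (jordan_matrix as)"
  using assms
proof (induct "length as" arbitrary: as rule: less_induct)
  case less
  show ?case
  proof (cases as)
    case Nil
    then show ?thesis
      by (auto simp: strongly_c_reversible_mat_def jordan_matrix_def intro!: bexI[of _ "1\<^sub>m 0"])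
  next
    case (Cons a rest)
    obtain k e where a: "a = (k, e)" by force
    have e: "e \<noteq> 0" using less(2) unfolding Cons a by auto
    show ?thesis
    proof (cases "c_dual_block a = a")
      case True
      then have "cnj e * e = 1" using e unfolding a c_dual_block_def by (simp add: field_simps)
      then have "strongly_c_reversible_mat k (jordan_block k e)"
        by (rule strongly_c_reversible_mat_jordan_block_unimodular)
      moreover have "strongly_c_reversible_mat (sum_list (map fst rest)) (jordan_matrix rest)"
        using less(2-3) c_dual_closed_diff[OF less(3) c_dual_closed_self_dual[OF True]]
        by (intro less(1)) (auto simp: Cons)
      ultimately show ?thesis
        unfolding Cons a by (simp add: jordan_matrix_Cons strongly_c_reversible_mat_block_diag_mat)
    next
      case False
      let ?b = "c_dual_block a"
      obtain xs ys where rest: "rest = xs @ ?b # ys"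
        using c_dual_closed_obtain_partner[OF less(3)[unfolded Cons] False] .
      let ?rest = "xs @ ys"
      have mset_as: "mset as = mset (a # ?b # ?rest)" unfolding Cons rest by simp
      have "strongly_c_reversible_mat (sum_list (map fst ?rest)) (jordan_matrix ?rest)"
        using less(2) c_dual_closed_diff[OF less(3) c_dual_closed_pair[of a]]
        by (intro less(1)) (auto simp: Cons rest)
      then have "strongly_c_reversible_mat (k + k + sum_list (map fst ?rest))
          (jordan_matrix (a # ?b # ?rest))"
        using strongly_c_reversible_mat_jordan_pair[OF e, of k]
        by (simp add: a c_dual_block_def jordan_matrix_Cons block_diag_mat_assoc
            strongly_c_reversible_mat_block_diag_mat)
      then show ?thesis
        using strongly_c_reversible_mat_similar[OF similar_mat_jordan_matrix_perm[OF mset_as]]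
        by (simp add: Cons rest a c_dual_block_def ac_simps)
    qed
  qed
qed

lemma dim_gen_eigenspace_similar_cnj_inverse:
  fixes A B :: "complex mat"
  assumes A: "A \<in> carrier_mat n n" and B: "B \<in> carrier_mat n n"
    and AB: "map_mat cnj A * B = 1\<^sub>m n" and sim: "similar_mat A B"
  shows "dim_gen_eigenspace A 0 k = 0"
    and "e \<noteq> 0 \<Longrightarrow> dim_gen_eigenspace A e = dim_gen_eigenspace A (inverse (cnj e))"
proof -
  have BA: "B * map_mat cnj A = 1\<^sub>m n"
    using AB by (rule mat_mult_left_right_inverse[OF map_carrier_mat[THEN iffD2, OF A] B])
  have "map_mat cnj (map_mat cnj A * B) = A * map_mat cnj B" using A B by simp
  then have "A * map_mat cnj B = 1\<^sub>m n" using AB by simp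
  moreover from this have "map_mat cnj B * A = 1\<^sub>m n"
    by (rule mat_mult_left_right_inverse[OF A map_carrier_mat[THEN iffD2, OF B]])
  ultimately show "dim_gen_eigenspace A 0 k = 0"
    using A B by (intro dim_gen_eigenspace_zero_invertible[of _ n "map_mat cnj B"]) auto
  assume "e \<noteq> 0"
  have "dim_gen_eigenspace A e = dim_gen_eigenspace B e"
    using dim_gen_eigenspace_similar[OF sim] by simp
  also have "\<dots> = dim_gen_eigenspace (map_mat cnj A) (cnj (inverse (cnj e)))"
    using dim_gen_eigenspace_inverse[OF _ B AB BA \<open>e \<noteq> 0\<close>] A by (auto simp: fun_eq_iff)
  also have "\<dots> = dim_gen_eigenspace A (inverse (cnj e))"
    by (rule dim_gen_eigenspace_map_cnj[OF A])
  finally show "dim_gen_eigenspace A e = dim_gen_eigenspace A (inverse (cnj e))" .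
qed

lemma jordan_nf_c_dual_closed:
  fixes A B :: "complex mat"
  assumes A: "A \<in> carrier_mat n n" and B: "B \<in> carrier_mat n n"
    and AB: "map_mat cnj A * B = 1\<^sub>m n" and sim: "similar_mat A B" and jnf: "jordan_nf A as"
  shows "\<forall>x \<in> set as. snd x \<noteq> 0" and "c_dual_closed (mset as)"
proof -
  note dgs = dim_gen_eigenspace_similar_cnj_inverse[OF A B AB sim]
  show "\<forall>x \<in> set as. snd x \<noteq> 0"
  proof
    fix x assume x: "x \<in> set as"
    obtain k e where xe: "x = (k, e)" by force
    have "k \<noteq> 0" using jnf x unfolding jordan_nf_def xe by force
    then have "count (mset as) (k, 0) = 0"
      by (simp add: count_mset_jordan_nf[OF jnf] compute_nr_of_jordan_blocks_def dgs(1))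
    then show "snd x \<noteq> 0" using x xe by auto
  qed
  show "c_dual_closed (mset as)"
    unfolding c_dual_closed_def c_dual_block_def
  proof
    fix x :: "nat \<times> complex"
    show "count (mset as) (fst x, inverse (cnj (snd x))) = count (mset as) x"
      using count_mset_jordan_nf_eq[OF jnf jnf dgs(2)[of "snd x"]]
      by (cases x; cases "snd x = 0") (auto simp del: complex_cnj_inverse)
  qed
qed

lemma strongly_c_reversible_mat_if_similar_cnj_inverse:
  fixes A B :: "complex mat"
  assumes A: "A \<in> carrier_mat n n" and B: "B \<in> carrier_mat n n"
    and AB: "map_mat cnj A * B = 1\<^sub>m n" and sim: "similar_mat A B"
  shows "strongly_c_reversible_mat n A"
proof -
  obtain as where jnf: "jordan_nf A as" using jordan_nf_exists_complex[OF A] by blast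
  then have sim_jnf: "similar_mat A (jordan_matrix as)" unfolding jordan_nf_def by simp
  from similar_matD[OF this] obtain n' where "{A, jordan_matrix as} \<subseteq> carrier_mat n' n'"
    by blast
  then have "sum_list (map fst as) = n" using A unfolding carrier_mat_def by simp
  moreover have "strongly_c_reversible_mat (sum_list (map fst as)) (jordan_matrix as)"
    using jordan_nf_c_dual_closed[OF A B AB sim jnf] by (rule strongly_c_reversible_mat_jordan_matrix)
  ultimately have "strongly_c_reversible_mat n (jordan_matrix as)" by simp
  then show ?thesis by (rule strongly_c_reversible_mat_similar[OF sim_jnf])
qed

section \<open>Matrices indexed by a finite type\<close>

definition to_index :: "'n :: finite \<Rightarrow> nat" where
  "to_index = (SOME f. bij_betw f (UNIV :: 'n set) {..<CARD('n)})"

definition of_index :: "nat \<Rightarrow> 'n :: finite" where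
  "of_index = inv_into UNIV to_index"

lemma bij_betw_to_index: "bij_betw (to_index :: 'n :: finite \<Rightarrow> nat) UNIV {..<CARD('n)}"
proof -
  have "\<exists>f. bij_betw f (UNIV :: 'n set) {..<CARD('n)}"
    using ex_bij_betw_finite_nat[of "UNIV :: 'n set"] by (simp add: atLeast0LessThan)
  then show ?thesis unfolding to_index_def by (rule someI_ex)
qed

lemma bij_betw_of_index: "bij_betw (of_index :: nat \<Rightarrow> 'n :: finite) {..<CARD('n)} UNIV"
  unfolding of_index_def by (rule bij_betw_inv_into[OF bij_betw_to_index])

lemma of_index_to_index [simp]: "of_index (to_index i) = i"
  unfolding of_index_def using bij_betw_to_index by (metis bij_betw_imp_inj_on inv_into_f_f UNIV_I)

lemma to_index_of_index [simp]: "j < CARD('n :: finite) \<Longrightarrow> to_index (of_index j :: 'n) = j"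
  unfolding of_index_def using bij_betw_to_index[where 'n = 'n]
  by (metis bij_betw_def f_inv_into_f lessThan_iff)

lemma to_index_less [simp]: "to_index (i :: 'n :: finite) < CARD('n)"
  using bij_betw_to_index[where 'n = 'n] unfolding bij_betw_def by auto

definition to_mat :: "'a ^ 'n ^ 'n \<Rightarrow> 'a mat" where
  "to_mat A = mat CARD('n) CARD('n) (\<lambda>(i, j). A $ of_index i $ of_index j)"

definition of_mat :: "'a mat \<Rightarrow> 'a ^ 'n ^ 'n" where
  "of_mat M = (\<chi> i j. M $$ (to_index i, to_index j))"

text \<open>From here on \<open>mat\<close>, \<open>det\<close> and \<open>$\<close> are those of HOL-Analysis, as in the definitions
  of \<^const>\<open>SL\<close> and c-reversibility, not those of the Jordan normal form library.\<close>

hide_const (open) Matrix.mat Determinant.det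
no_notation Matrix.vec_index (infixl \<open>$\<close> 100)

lemma to_mat_carrier [simp]: "to_mat (A :: 'a ^ 'n ^ 'n) \<in> carrier_mat CARD('n) CARD('n)"
  unfolding to_mat_def by simp

lemma of_mat_to_mat [simp]: "of_mat (to_mat A) = A"
  unfolding of_mat_def to_mat_def by (simp add: vec_eq_iff)

lemma to_mat_of_mat: "M \<in> carrier_mat CARD('n) CARD('n) \<Longrightarrow> to_mat (of_mat M :: 'a ^ 'n ^ 'n) = M"
  unfolding of_mat_def to_mat_def by auto

lemma to_mat_inject: "to_mat A = to_mat B \<Longrightarrow> A = B"
  by (metis of_mat_to_mat)

lemma to_mat_mult: "to_mat ((A :: 'a :: semiring_1 ^ 'n ^ 'n) ** B) = to_mat A * to_mat B"
proof (rule eq_matI)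
  fix i j assume "i < dim_row (to_mat A * to_mat B)" and "j < dim_col (to_mat A * to_mat B)"
  then have i: "i < CARD('n)" and j: "j < CARD('n)" by (auto simp: to_mat_def)
  have "(to_mat A * to_mat B) $$ (i, j) =
      (\<Sum>l \<in> {..<CARD('n)}. A $ of_index i $ of_index l * B $ of_index l $ of_index j)"
    using i j by (simp add: to_mat_def scalar_prod_def atLeast0LessThan)
  also have "\<dots> = (\<Sum>l \<in> UNIV. A $ of_index i $ l * B $ l $ of_index j)"
    by (rule sum.reindex_bij_betw[OF bij_betw_of_index])
  finally show "to_mat (A ** B) $$ (i, j) = (to_mat A * to_mat B) $$ (i, j)"
    using i j by (simp add: to_mat_def matrix_matrix_mult_def)
qed (auto simp: to_mat_def)

lemma to_mat_one: "to_mat (mat 1 :: 'a :: zero_neq_one ^ 'n ^ 'n) = 1\<^sub>m CARD('n)"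
proof (rule eq_matI)
  fix i j assume "i < dim_row (1\<^sub>m CARD('n) :: 'a mat)" and "j < dim_col (1\<^sub>m CARD('n) :: 'a mat)"
  then have i: "i < CARD('n)" and j: "j < CARD('n)" by auto
  then have "(of_index i :: 'n) = of_index j \<longleftrightarrow> i = j" by (metis to_index_of_index)
  then show "to_mat (mat 1 :: 'a ^ 'n ^ 'n) $$ (i, j) = 1\<^sub>m CARD('n) $$ (i, j)"
    using i j by (simp add: to_mat_def Finite_Cartesian_Product.mat_def)
qed (auto simp: to_mat_def)

lemma to_mat_conj_mat: "to_mat (conj_mat A) = map_mat cnj (to_mat A)"
  unfolding to_mat_def conj_mat_def by auto

lemma det_conj_mat: "det (conj_mat A) = cnj (det A)"
  by (simp add: Determinants.det_def conj_mat_def)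

lemma matrix_inv_mult:
  assumes "det (A :: complex ^ 'n ^ 'n) \<noteq> 0"
  shows "A ** matrix_inv A = mat 1" and "matrix_inv A ** A = mat 1"
proof -
  have "\<exists>A'. A ** A' = mat 1 \<and> A' ** A = mat 1"
    using assms invertible_det_nz unfolding invertible_def by blast
  then show "A ** matrix_inv A = mat 1" and "matrix_inv A ** A = mat 1"
    unfolding matrix_inv_def by (metis (mono_tags, lifting) someI_ex)+
qed

lemma c_symmetry_iff:
  fixes A g :: "complex ^ 'n ^ 'n"
  assumes A: "det A \<noteq> 0" and g: "det g \<noteq> 0"
  shows "g ** A ** matrix_inv g = matrix_inv (conj_mat A) \<longleftrightarrow> conj_mat A ** g ** A = g"
proof -
  have cA: "det (conj_mat A) \<noteq> 0" using A by (simp add: det_conj_mat)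
  note inv = matrix_inv_mult[OF A] matrix_inv_mult[OF g] matrix_inv_mult[OF cA]
  show ?thesis
  proof
    assume gA: "g ** A ** matrix_inv g = matrix_inv (conj_mat A)"
    have "conj_mat A ** g ** A = conj_mat A ** (g ** A ** matrix_inv g) ** g"
      using inv by (simp add: matrix_mul_assoc[symmetric])
    also have "\<dots> = g" unfolding gA using inv by simp
    finally show "conj_mat A ** g ** A = g" .
  next
    assume gA: "conj_mat A ** g ** A = g"
    have "g ** A ** matrix_inv g = matrix_inv (conj_mat A) ** (conj_mat A ** g ** A) ** matrix_inv g"
      using inv by (simp add: matrix_mul_assoc)
    also have "\<dots> = matrix_inv (conj_mat A)" unfolding gA using inv by (simp add: matrix_mul_assoc[symmetric])
    finally show "g ** A ** matrix_inv g = matrix_inv (conj_mat A)" .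
  qed
qed

lemma similar_mat_to_mat:
  fixes A h :: "complex ^ 'n ^ 'n"
  assumes "det h \<noteq> 0"
  shows "similar_mat (to_mat (h ** A ** matrix_inv h)) (to_mat A)"
proof (rule similar_matI)
  show "to_mat h * to_mat (matrix_inv h) = 1\<^sub>m CARD('n)" "to_mat (matrix_inv h) * to_mat h = 1\<^sub>m CARD('n)"
    using matrix_inv_mult[OF assms] by (simp_all flip: to_mat_mult add: to_mat_one)
  show "to_mat (h ** A ** matrix_inv h) = to_mat h * to_mat A * to_mat (matrix_inv h)"
    by (simp add: to_mat_mult)
qed simp

lemma strongly_c_reversible_mat_to_mat:
  fixes A :: "complex ^ 'n ^ 'n"
  assumes "strongly_c_reversible_mat CARD('n) (to_mat A)"
  obtains g where "g ** conj_mat g = mat 1" and "conj_mat A ** g ** A = g"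
proof -
  from assms obtain gm where gm: "gm \<in> carrier_mat CARD('n) CARD('n)"
    and gg: "gm * map_mat cnj gm = 1\<^sub>m CARD('n)" and gA: "map_mat cnj (to_mat A) * gm * to_mat A = gm"
    unfolding strongly_c_reversible_mat_def by blast
  define g :: "complex ^ 'n ^ 'n" where "g = of_mat gm"
  have g: "to_mat g = gm" unfolding g_def using gm by (rule to_mat_of_mat)
  show ?thesis
  proof
    show "g ** conj_mat g = mat 1"
      by (rule to_mat_inject) (simp add: to_mat_mult to_mat_conj_mat to_mat_one g gg)
    show "conj_mat A ** g ** A = g"
      by (rule to_mat_inject) (simp add: to_mat_mult to_mat_conj_mat g gA)
  qed
qed

section \<open>Normalising the determinant of an involutory c-symmetry\<close>

definition scale_mat :: "complex \<Rightarrow> complex ^ 'n ^ 'n \<Rightarrow> complex ^ 'n ^ 'n" where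
  "scale_mat c A = (\<chi> i j. c * A $ i $ j)"

lemma det_scale_mat: "det (scale_mat c A) = c ^ CARD('n) * det (A :: complex ^ 'n ^ 'n)"
  using Determinants.det_rows_mul[of "\<lambda>_. c" "\<lambda>i. A $ i"]
  by (simp add: scale_mat_def vector_scalar_mult_def)

lemma conj_mat_scale_mat: "conj_mat (scale_mat c A) = scale_mat (cnj c) (conj_mat A)"
  by (simp add: scale_mat_def conj_mat_def vec_eq_iff)

lemma scale_mat_mult_left: "scale_mat c A ** B = scale_mat c (A ** B)"
  by (simp add: scale_mat_def matrix_matrix_mult_def vec_eq_iff sum_distrib_left mult.assoc)

lemma scale_mat_mult_right: "A ** scale_mat c B = scale_mat c (A ** B)"
  by (simp add: scale_mat_def matrix_matrix_mult_def vec_eq_iff sum_distrib_left mult.left_commute)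

lemma scale_mat_scale_mat: "scale_mat a (scale_mat b A) = scale_mat (a * b) A"
  by (simp add: scale_mat_def vec_eq_iff mult.assoc)

lemma scale_mat_one: "scale_mat 1 A = A"
  by (simp add: scale_mat_def vec_eq_iff)

lemma unimodular_root:
  assumes d: "cnj d * d = 1" and n: "n > 0"
  obtains c :: complex where "c ^ n = cnj d" and "cnj c * c = 1"
proof
  define c where "c = exp (ln (cnj d) / of_nat n)"
  have "cnj d \<noteq> 0" using d by auto
  then show cn: "c ^ n = cnj d" using n by (simp add: c_def exp_of_nat_mult[symmetric])
  have "complex_of_real (norm d ^ 2) = 1" using d complex_norm_square[of d] by (simp add: mult.commute)
  then have "norm d ^ 2 = 1" by (simp only: of_real_eq_1_iff)
  then have "norm d = 1" using power_eq_imp_eq_base[of "norm d" 2 1] by simp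
  then have "norm c ^ n = 1" using cn by (simp add: norm_power[symmetric])
  then have "norm c = 1" using n power_eq_imp_eq_base[of "norm c" n 1] by simp
  then show "cnj c * c = 1" using complex_norm_square[of c] by (simp add: mult.commute)
qed

lemma involutory_c_symmetry_SL:
  fixes A g :: "complex ^ 'n ^ 'n"
  assumes gg: "g ** conj_mat g = mat 1" and gA: "conj_mat A ** g ** A = g"
  obtains h where "h \<in> SL" "h ** conj_mat h = mat 1" "conj_mat A ** h ** A = h"
proof -
  have "det g * cnj (det g) = 1"
    using arg_cong[OF gg, of det] by (simp add: det_mul det_conj_mat)
  then obtain c where c: "c ^ CARD('n) = cnj (det g)" and cc: "cnj c * c = 1"
    using unimodular_root[of "det g" "CARD('n)"] by (auto simp: mult.commute)
  show ?thesis
  proof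
    show "scale_mat c g \<in> SL"
      using \<open>det g * cnj (det g) = 1\<close> by (simp add: SL_def det_scale_mat c mult.commute)
    show "scale_mat c g ** conj_mat (scale_mat c g) = mat 1"
      using gg cc by (simp add: conj_mat_scale_mat scale_mat_mult_left scale_mat_mult_right
          scale_mat_scale_mat mult.commute scale_mat_one)
    show "conj_mat A ** scale_mat c g ** A = scale_mat c g"
      using gA by (simp add: scale_mat_mult_left scale_mat_mult_right)
  qed
qed

theorem theorem1p2:
  fixes A :: "complex^'n^'n"
  assumes "A \<in> SL"
  shows "c_reversible A \<longleftrightarrow> strongly_c_reversible A"
proof
  assume "strongly_c_reversible A"
  then show "c_reversible A" unfolding strongly_c_reversible_def c_reversible_def by blast
next
  assume "c_reversible A"
  then obtain h where "h \<in> SL" and hA: "h ** A ** matrix_inv h = matrix_inv (conj_mat A)"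
    unfolding c_reversible_def by blast
  have dA: "det A \<noteq> 0" and dh: "det h \<noteq> 0" using assms \<open>h \<in> SL\<close> by (auto simp: SL_def)
  then have "det (conj_mat A) \<noteq> 0" by (simp add: det_conj_mat)
  let ?A = "to_mat A" and ?B = "to_mat (matrix_inv (conj_mat A))"
  have "map_mat cnj ?A * ?B = 1\<^sub>m CARD('n)"
    using matrix_inv_mult(1)[OF \<open>det (conj_mat A) \<noteq> 0\<close>]
    by (simp flip: to_mat_conj_mat to_mat_mult add: to_mat_one)
  moreover have "similar_mat ?A ?B"
    using similar_mat_sym[OF similar_mat_to_mat[OF dh, of A]] unfolding hA .
  ultimately have "strongly_c_reversible_mat CARD('n) ?A"
    by (intro strongly_c_reversible_mat_if_similar_cnj_inverse) auto
  then obtain g where "g ** conj_mat g = mat 1" "conj_mat A ** g ** A = g"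
    by (rule strongly_c_reversible_mat_to_mat)
  then obtain g where "g \<in> SL" "g ** conj_mat g = mat 1" "conj_mat A ** g ** A = g"
    by (rule involutory_c_symmetry_SL)
  moreover have "det g \<noteq> 0" using \<open>g \<in> SL\<close> by (simp add: SL_def)
  ultimately show "strongly_c_reversible A"
    unfolding strongly_c_reversible_def using c_symmetry_iff[OF dA] by blast
qed

end
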